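(* Let $r\in\{-1,+1\}$ and $\Phi(x,y)=r\phi(x-y)$. Let $f:\mathbb R^n\to\overline{\mathbb R}$ be left $\Phi$-convex, and let $\bar x\in\mathbb R^n$ be a point where $f$ is finite and strictly continuous. Then $\partial_\Phi f(\bar x)$ is nonempty and compact.
   Context: Standing assumption: $\phi:\mathbb R^n\to\mathbb R$ is convex, finite-valued, differentiable and strictly convex (Legendre with full domain), super-coercive. Left $\Phi$-convex: $f=\sup_{i\in I}\Phi(\cdot,y_i)-\beta_i$ for some family $(y_i,\beta_i)\in\mathbb R^n\times\overline{\mathbb R}$. For $\bar x\in\operatorname{dom}f$, $\partial_\Phi f(\bar x)=\{\bar y: f(x)\ge f(\bar x)+\Phi(x,\bar y)-\Phi(\bar x,\bar y)\ \forall x\}$. $f$ is strictly continuous at $\bar x$ (with $f(\bar x)$ finite) if $\limsup_{x,x'\to\bar x,\,x\neq x'}|f(x)-f(x')|/\|x-x'\|<\infty$. *)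

theory Defs
  imports "HOL-Analysis.Analysis"
begin

definition strictly_convex_on :: "'a::real_vector set \<Rightarrow> ('a \<Rightarrow> real) \<Rightarrow> bool" where
  "strictly_convex_on S g \<longleftrightarrow>
     (\<forall>x\<in>S. \<forall>y\<in>S. \<forall>t::real. x \<noteq> y \<and> 0 < t \<and> t < 1 \<longrightarrow>
        g ((1 - t) *\<^sub>R x + t *\<^sub>R y) < (1 - t) * g x + t * g y)"

definition legendre_supercoercive :: "('a::euclidean_space \<Rightarrow> real) \<Rightarrow> bool" where
  "legendre_supercoercive phi \<longleftrightarrow>
     convex_on UNIV phi \<and> (\<forall>x. phi differentiable (at x)) \<and> strictly_convex_on UNIV phi \<and>
     filterlim (\<lambda>x. phi x / norm x) at_top at_infinity"

definition left_Phi_convex ::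
  "('a \<Rightarrow> 'b \<Rightarrow> real) \<Rightarrow> ('a \<Rightarrow> ereal) \<Rightarrow> bool" where
  "left_Phi_convex Phi f \<longleftrightarrow>
     (\<exists>F :: ('b \<times> ereal) set. \<forall>x. f x = (SUP p\<in>F. ereal (Phi x (fst p)) - snd p))"

definition Phi_subdiff ::
  "('a \<Rightarrow> 'b \<Rightarrow> real) \<Rightarrow> ('a \<Rightarrow> ereal) \<Rightarrow> 'a \<Rightarrow> 'b set" where
  "Phi_subdiff Phi f xb =
     {yb. \<forall>x. f x \<ge> f xb + ereal (Phi x yb - Phi xb yb)}"

definition strictly_continuous_at :: "('a::metric_space \<Rightarrow> ereal) \<Rightarrow> 'a \<Rightarrow> bool" where
  "strictly_continuous_at f xb \<longleftrightarrow>
     \<bar>f xb\<bar> \<noteq> \<infinity> \<and>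
     Limsup (at (xb, xb) within {p. fst p \<noteq> snd p})
        (\<lambda>p. \<bar>f (fst p) - f (snd p)\<bar> / ereal (dist (fst p) (snd p))) < \<infinity>"

end

theory Submission
  imports Defs
begin

text \<open>Strict continuity gives a majorant f x \<le> f xb + L |x - xb| near xb. Hence every
  \<epsilon>-subgradient y with \<epsilon> \<le> 1 satisfies r \<phi>(x - y) - r \<phi>(xb - y) \<le> 1 + L |x - xb| near xb;
  by convexity this bounds the slope of \<phi> along the ray towards xb - y, which super-coercivity
  forbids when |xb - y| is large. So the \<epsilon>-subdifferentials are bounded. They are nonempty by
  the sup representation of f, and by continuity of \<phi> a limit of \<epsilon>-subgradients with
  \<epsilon> \<rightarrow> 0 is a subgradient.\<close>

definition Phi_eps_subdiff ::
  "('a \<Rightarrow> 'b \<Rightarrow> real) \<Rightarrow> ('a \<Rightarrow> ereal) \<Rightarrow> 'a \<Rightarrow> real \<Rightarrow> 'b set" where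
  "Phi_eps_subdiff Phi f xb \<epsilon> =
     {yb. \<forall>x. f x \<ge> f xb + ereal (Phi x yb - Phi xb yb - \<epsilon>)}"

lemma Phi_eps_subdiff_0 [simp]: "Phi_eps_subdiff Phi f xb 0 = Phi_subdiff Phi f xb"
  by (simp add: Phi_eps_subdiff_def Phi_subdiff_def)

lemma Phi_eps_subdiff_mono:
  assumes "\<epsilon> \<le> \<epsilon>'"
  shows "Phi_eps_subdiff Phi f xb \<epsilon> \<subseteq> Phi_eps_subdiff Phi f xb \<epsilon>'"
proof
  fix y assume y: "y \<in> Phi_eps_subdiff Phi f xb \<epsilon>"
  have "f xb + ereal (Phi x y - Phi xb y - \<epsilon>') \<le> f x" for x
  proof -
    have "f xb + ereal (Phi x y - Phi xb y - \<epsilon>') \<le> f xb + ereal (Phi x y - Phi xb y - \<epsilon>)"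
      using assms by (intro add_left_mono) simp
    also have "\<dots> \<le> f x"
      using y unfolding Phi_eps_subdiff_def by blast
    finally show ?thesis .
  qed
  then show "y \<in> Phi_eps_subdiff Phi f xb \<epsilon>'"
    unfolding Phi_eps_subdiff_def by blast
qed

lemma left_Phi_convex_Phi_eps_subdiff_nonempty:
  assumes "left_Phi_convex Phi f" and "\<bar>f xb\<bar> \<noteq> \<infinity>" and "\<epsilon> > 0"
  shows "Phi_eps_subdiff Phi f xb \<epsilon> \<noteq> {}"
proof -
  obtain F where fF: "\<And>x. f x = (SUP p\<in>F. ereal (Phi x (fst p)) - snd p)"
    using assms(1) unfolding left_Phi_convex_def by blast
  obtain fb where fb: "f xb = ereal fb"
    using assms(2) by (cases "f xb") auto
  have "ereal (fb - \<epsilon>) < f xb"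
    using fb assms(3) by simp
  then obtain p where "p \<in> F" and near: "ereal (fb - \<epsilon>) < ereal (Phi xb (fst p)) - snd p"
    unfolding fF less_SUP_iff by blast
  define y where "y = fst p"
  have below: "ereal (Phi x y) - snd p \<le> f x" for x
    unfolding fF y_def using \<open>p \<in> F\<close> by (rule SUP_upper)
  obtain b where b: "snd p = ereal b"
    using near below[of xb] fb by (cases "snd p") (auto simp: y_def)
  have "f xb + ereal (Phi x y - Phi xb y - \<epsilon>) \<le> f x" for x
  proof -
    have "f xb + ereal (Phi x y - Phi xb y - \<epsilon>) \<le> ereal (Phi x y) - snd p"
      using near fb b by (simp add: y_def)
    then show ?thesis using below order_trans by blast
  qed
  then show ?thesis
    unfolding Phi_eps_subdiff_def by blast
qed

lemma limit_of_Phi_eps_subgradients: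
  fixes Phi :: "'a \<Rightarrow> 'b::topological_space \<Rightarrow> real"
  assumes cont: "\<And>x. continuous_on UNIV (Phi x)" and "\<bar>f xb\<bar> \<noteq> \<infinity>"
    and y: "\<And>k. y k \<in> Phi_eps_subdiff Phi f xb (\<epsilon> k)"
    and "\<epsilon> \<longlonglongrightarrow> 0" and "y \<longlonglongrightarrow> yb"
  shows "yb \<in> Phi_subdiff Phi f xb"
proof -
  obtain fb where fb: "f xb = ereal fb"
    using assms(2) by (cases "f xb") auto
  have "ereal (fb + (Phi x yb - Phi xb yb)) \<le> f x" for x
  proof -
    have Phi_y: "(\<lambda>k. Phi z (y k)) \<longlonglongrightarrow> Phi z yb" for z
      using continuous_on_tendsto_compose[OF cont \<open>y \<longlonglongrightarrow> yb\<close>] by (simp add: comp_def)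
    have "(\<lambda>k. fb + (Phi x (y k) - Phi xb (y k) - \<epsilon> k)) \<longlonglongrightarrow> fb + (Phi x yb - Phi xb yb - 0)"
      by (intro tendsto_intros Phi_y \<open>\<epsilon> \<longlonglongrightarrow> 0\<close>)
    moreover have "ereal (fb + (Phi x (y k) - Phi xb (y k) - \<epsilon> k)) \<le> f x" for k
      using y[of k] fb unfolding Phi_eps_subdiff_def by simp
    ultimately show ?thesis
      by (intro LIMSEQ_le_const2[OF tendsto_ereal]) auto
  qed
  then show ?thesis
    unfolding Phi_subdiff_def fb by simp
qed

lemma closed_Phi_subdiff:
  fixes Phi :: "'a \<Rightarrow> 'b::metric_space \<Rightarrow> real"
  assumes "\<And>x. continuous_on UNIV (Phi x)" and "\<bar>f xb\<bar> \<noteq> \<infinity>"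
  shows "closed (Phi_subdiff Phi f xb)"
  unfolding closed_sequential_limits
  using limit_of_Phi_eps_subgradients[of Phi f xb _ "\<lambda>_. 0", OF assms] by auto

lemma strictly_continuous_at_imp_local_majorant:
  fixes f :: "'a::metric_space \<Rightarrow> ereal"
  assumes "strictly_continuous_at f xb"
  obtains \<delta> L where "\<delta> > 0" "\<And>x. dist x xb < \<delta> \<Longrightarrow> f x \<le> f xb + ereal (L * dist x xb)"
proof -
  let ?q = "\<lambda>p. \<bar>f (fst p) - f (snd p)\<bar> / ereal (dist (fst p) (snd p))"
  let ?F = "at (xb, xb) within {p. fst p \<noteq> snd p}"
  have fin: "\<bar>f xb\<bar> \<noteq> \<infinity>" and "Limsup ?F ?q \<noteq> \<infinity>"
    using assms unfolding strictly_continuous_at_def by auto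
  then obtain n :: nat where "Limsup ?F ?q < ereal (real n)"
    unfolding less_PInf_Ex_of_nat by blast
  then have "eventually (\<lambda>p. ?q p < ereal (real n)) ?F"
    by (rule Limsup_lessD)
  then obtain \<delta> where "\<delta> > 0" and \<delta>: "\<And>p. fst p \<noteq> snd p \<Longrightarrow> p \<noteq> (xb, xb) \<Longrightarrow>
      dist p (xb, xb) < \<delta> \<Longrightarrow> ?q p < ereal (real n)"
    unfolding eventually_at by blast
  obtain fb where fb: "f xb = ereal fb"
    using fin by (cases "f xb") auto
  have "f x \<le> f xb + ereal (real n * dist x xb)" if "dist x xb < \<delta>" for x
  proof (cases "x = xb")
    case True
    then show ?thesis using fb by simp
  next
    case False
    then have q: "?q (x, xb) < ereal (real n)" and "dist x xb > 0"
      using \<delta>[of "(x, xb)"] that by (auto simp: dist_Pair_Pair)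
    show ?thesis
    proof (cases "f x")
      case (real a)
      then have "\<bar>a - fb\<bar> / dist x xb < real n"
        using q fb \<open>dist x xb > 0\<close> by simp
      then show ?thesis
        using real fb \<open>dist x xb > 0\<close> by (simp add: field_simps)
    qed (use q fb \<open>dist x xb > 0\<close> in simp_all)
  qed
  with \<open>\<delta> > 0\<close> show thesis by (rule that)
qed

lemma convex_on_midpoint_increment:
  assumes "convex_on UNIV phi"
  shows "phi z - phi (z - h) \<le> phi (z + h) - phi z"
proof -
  have "phi ((1 - 1/2) *\<^sub>R (z + h) + (1/2) *\<^sub>R (z - h))
          \<le> (1 - 1/2) * phi (z + h) + (1/2) * phi (z - h)"
    by (rule convex_onD[OF assms]) auto
  moreover have "(1 - 1/2) *\<^sub>R (z + h) + (1/2::real) *\<^sub>R (z - h) = z"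
    by (simp add: algebra_simps flip: scaleR_add_left)
  ultimately show ?thesis by simp
qed

lemma convex_on_slope_toward_origin:
  assumes "convex_on UNIV phi" and "0 \<le> t" "t \<le> 1"
  shows "t * (phi z - phi 0) \<le> phi z - phi ((1 - t) *\<^sub>R z)"
proof -
  have "phi ((1 - t) *\<^sub>R z + t *\<^sub>R 0) \<le> (1 - t) * phi z + t * phi 0"
    using assms by (intro convex_onD) auto
  then show ?thesis by (simp add: algebra_simps)
qed

lemma supercoercive_convex_radial_increment_large:
  fixes phi :: "'a::real_normed_vector \<Rightarrow> real"
  assumes conv: "convex_on UNIV phi"
    and coer: "filterlim (\<lambda>x. phi x / norm x) at_top at_infinity" and "\<epsilon> > 0"
  obtains R where "\<And>z. norm z > R \<Longrightarrow> phi z - phi (z - (\<epsilon> / norm z) *\<^sub>R z) > K"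
proof -
  define M where "M = K / \<epsilon> + \<bar>phi 0\<bar> + 1"
  have "eventually (\<lambda>z. phi z / norm z \<ge> M) at_infinity"
    using coer by (simp add: filterlim_at_top)
  then obtain b where b: "\<And>z. b \<le> norm z \<Longrightarrow> phi z / norm z \<ge> M"
    unfolding eventually_at_infinity by blast
  have "phi z - phi (z - (\<epsilon> / norm z) *\<^sub>R z) > K" if "norm z > max b (max 1 \<epsilon>)" for z
  proof -
    have z: "b < norm z" "1 < norm z" "\<epsilon> < norm z" and "norm z > 0"
      using that by auto
    have "phi z \<ge> M * norm z"
      using b[of z] z \<open>norm z > 0\<close> by (simp add: pos_le_divide_eq)
    moreover have "phi 0 \<le> \<bar>phi 0\<bar> * norm z"
      using z(2) by (metis abs_ge_self abs_ge_zero order_trans less_le_not_le mult_le_cancel_left1)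
    ultimately have "phi z - phi 0 \<ge> (K / \<epsilon> + 1) * norm z"
      by (simp add: M_def algebra_simps)
    then have "\<epsilon> / norm z * (phi z - phi 0) \<ge> K + \<epsilon>"
      using \<open>norm z > 0\<close> \<open>\<epsilon> > 0\<close> by (simp add: field_simps)
    moreover have "\<epsilon> / norm z * (phi z - phi 0) \<le> phi z - phi ((1 - \<epsilon> / norm z) *\<^sub>R z)"
      using z \<open>\<epsilon> > 0\<close> by (intro convex_on_slope_toward_origin[OF conv]) (auto simp: divide_le_eq_1)
    ultimately show ?thesis
      using \<open>\<epsilon> > 0\<close> by (simp add: algebra_simps)
  qed
  then show thesis by (rule that)
qed

lemma supercoercive_local_growth_bounded:
  fixes phi :: "'a::real_normed_vector \<Rightarrow> real"
  assumes conv: "convex_on UNIV phi"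
    and coer: "filterlim (\<lambda>x. phi x / norm x) at_top at_infinity"
    and r: "r \<in> {-1, 1}" and "\<delta> > 0"
  obtains R where "\<And>y. (\<And>x. dist x xb < \<delta> \<Longrightarrow> r * phi (x - y) - r * phi (xb - y) \<le> 1 + L * dist x xb)
              \<Longrightarrow> norm (xb - y) \<le> R"
proof -
  define \<epsilon> where "\<epsilon> = \<delta> / 2"
  have "0 < \<epsilon>" "\<epsilon> < \<delta>"
    using \<open>\<delta> > 0\<close> by (auto simp: \<epsilon>_def)
  obtain R where R: "\<And>z. norm z > R \<Longrightarrow> phi z - phi (z - (\<epsilon> / norm z) *\<^sub>R z) > 1 + L * \<epsilon>"
    using supercoercive_convex_radial_increment_large[OF conv coer \<open>0 < \<epsilon>\<close>] by blast
  have "norm (xb - y) \<le> max R 0"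
    if H: "\<And>x. dist x xb < \<delta> \<Longrightarrow> r * phi (x - y) - r * phi (xb - y) \<le> 1 + L * dist x xb" for y
  proof (rule ccontr)
    define z where "z = xb - y"
    define h where "h = (\<epsilon> / norm z) *\<^sub>R z"
    assume "\<not> norm (xb - y) \<le> max R 0"
    then have large: "phi z - phi (z - h) > 1 + L * \<epsilon>" and "z \<noteq> 0"
      using R by (auto simp: z_def h_def)
    then have "dist (xb + h) xb = \<epsilon>" "dist (xb - h) xb = \<epsilon>"
      using \<open>0 < \<epsilon>\<close> by (auto simp: h_def dist_norm)
    show False
    proof (cases "r = 1")
      case True
      then have "phi (z + h) - phi z \<le> 1 + L * \<epsilon>"
        using H[of "xb + h"] \<open>dist (xb + h) xb = \<epsilon>\<close> \<open>\<epsilon> < \<delta>\<close> by (simp add: z_def algebra_simps)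
      then show False
        using large convex_on_midpoint_increment[OF conv, of z h] by linarith
    next
      case False
      with r have "r = -1" by auto
      then show False
        using large H[of "xb - h"] \<open>dist (xb - h) xb = \<epsilon>\<close> \<open>\<epsilon> < \<delta>\<close> by (simp add: z_def algebra_simps)
    qed
  qed
  then show thesis by (rule that)
qed

lemma bounded_Phi_eps_subdiff:
  fixes phi :: "'a::real_normed_vector \<Rightarrow> real"
  assumes "convex_on UNIV phi" and "filterlim (\<lambda>x. phi x / norm x) at_top at_infinity"
    and "r \<in> {-1, 1}" and "strictly_continuous_at f xb"
  shows "bounded (Phi_eps_subdiff (\<lambda>x y. r * phi (x - y)) f xb 1)"
proof -
  obtain fb where fb: "f xb = ereal fb"
    using assms(4) unfolding strictly_continuous_at_def by (cases "f xb") auto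
  obtain \<delta> L where "\<delta> > 0" and majorant: "\<And>x. dist x xb < \<delta> \<Longrightarrow> f x \<le> f xb + ereal (L * dist x xb)"
    using strictly_continuous_at_imp_local_majorant[OF assms(4)] by blast
  obtain R where R: "\<And>y. (\<And>x. dist x xb < \<delta> \<Longrightarrow> r * phi (x - y) - r * phi (xb - y) \<le> 1 + L * dist x xb)
      \<Longrightarrow> norm (xb - y) \<le> R"
    using supercoercive_local_growth_bounded[OF assms(1-3) \<open>\<delta> > 0\<close>] by blast
  have "Phi_eps_subdiff (\<lambda>x y. r * phi (x - y)) f xb 1 \<subseteq> cball xb R"
  proof
    fix y assume y: "y \<in> Phi_eps_subdiff (\<lambda>x y. r * phi (x - y)) f xb 1"
    have "norm (xb - y) \<le> R"
    proof (rule R)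
      fix x assume "dist x xb < \<delta>"
      then have "f xb + ereal (r * phi (x - y) - r * phi (xb - y) - 1) \<le> f xb + ereal (L * dist x xb)"
        using y majorant order_trans unfolding Phi_eps_subdiff_def by blast
      then show "r * phi (x - y) - r * phi (xb - y) \<le> 1 + L * dist x xb"
        using fb by simp
    qed
    then show "y \<in> cball xb R" by (simp add: dist_norm)
  qed
  then show ?thesis
    using bounded_cball bounded_subset by blast
qed

lemma Phi_subdiff_nonempty_if_bounded_Phi_eps_subdiff:
  fixes Phi :: "'a \<Rightarrow> 'b::heine_borel \<Rightarrow> real"
  assumes "left_Phi_convex Phi f" and fin: "\<bar>f xb\<bar> \<noteq> \<infinity>"
    and cont: "\<And>x. continuous_on UNIV (Phi x)"
    and bdd: "bounded (Phi_eps_subdiff Phi f xb 1)"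
  shows "Phi_subdiff Phi f xb \<noteq> {}"
proof -
  have "Phi_eps_subdiff Phi f xb (1 / (real k + 1)) \<noteq> {}" for k
    by (rule left_Phi_convex_Phi_eps_subdiff_nonempty[OF assms(1) fin]) simp
  then have "\<exists>y. y \<in> Phi_eps_subdiff Phi f xb (1 / (real k + 1))" for k
    by blast
  define y where "y k = (SOME y. y \<in> Phi_eps_subdiff Phi f xb (1 / (real k + 1)))" for k
  have y: "y k \<in> Phi_eps_subdiff Phi f xb (1 / (real k + 1))" for k
    unfolding y_def by (rule someI_ex) fact
  have "y k \<in> Phi_eps_subdiff Phi f xb 1" for k
    using y[of k] Phi_eps_subdiff_mono[of "1 / (real k + 1)" 1 Phi f xb] by auto
  then have "bounded (range y)"
    using bdd bounded_subset by (metis image_subset_iff)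
  then obtain yb \<sigma> where "strict_mono \<sigma>" and lim: "(y \<circ> \<sigma>) \<longlonglongrightarrow> yb"
    using bounded_imp_convergent_subsequence by blast
  have "(\<lambda>k. 1 / (real (\<sigma> k) + 1)) \<longlonglongrightarrow> 0"
    using LIMSEQ_subseq_LIMSEQ[OF LIMSEQ_inverse_real_of_nat \<open>strict_mono \<sigma>\<close>]
    by (simp add: comp_def inverse_eq_divide add.commute)
  with lim have "yb \<in> Phi_subdiff Phi f xb"
    by (intro limit_of_Phi_eps_subgradients[of Phi f xb "y \<circ> \<sigma>", OF cont fin]) (simp_all add: y)
  then show ?thesis
    by blast
qed

theorem mainTheorem9:
  fixes phi :: "real ^ 'n \<Rightarrow> real" and r :: real
    and f :: "real ^ 'n \<Rightarrow> ereal" and xb :: "real ^ 'n"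
  assumes "legendre_supercoercive phi"
    and "r \<in> {-1, 1}"
    and "left_Phi_convex (\<lambda>x y. r * phi (x - y)) f"
    and "strictly_continuous_at f xb"
  shows "Phi_subdiff (\<lambda>x y. r * phi (x - y)) f xb \<noteq> {} \<and>
         compact (Phi_subdiff (\<lambda>x y. r * phi (x - y)) f xb)"
proof -
  let ?Phi = "\<lambda>x y. r * phi (x - y)"
  have conv: "convex_on UNIV phi" and coer: "filterlim (\<lambda>x. phi x / norm x) at_top at_infinity"
    and "\<And>x. phi differentiable (at x)"
    using assms(1) unfolding legendre_supercoercive_def by auto
  then have "continuous_on UNIV phi"
    by (simp add: continuous_at_imp_continuous_on differentiable_imp_continuous_within)
  then have "continuous_on UNIV (\<lambda>y. phi (x - y))" for x
    using continuous_on_compose2 continuous_on_diff[OF continuous_on_const continuous_on_id] by blast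
  then have cont: "continuous_on UNIV (?Phi x)" for x
    by (rule continuous_on_mult_left)
  have fin: "\<bar>f xb\<bar> \<noteq> \<infinity>"
    using assms(4) unfolding strictly_continuous_at_def by simp
  have bdd: "bounded (Phi_eps_subdiff ?Phi f xb 1)"
    using bounded_Phi_eps_subdiff[OF conv coer assms(2,4)] .
  moreover have "Phi_subdiff ?Phi f xb \<subseteq> Phi_eps_subdiff ?Phi f xb 1"
    using Phi_eps_subdiff_mono[of 0 1] by simp
  ultimately show ?thesis
    using Phi_subdiff_nonempty_if_bounded_Phi_eps_subdiff[OF assms(3) fin cont bdd]
      closed_Phi_subdiff[of ?Phi f xb, OF cont fin] bounded_subset
    by (auto simp: compact_eq_bounded_closed)
qed

end
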